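(* Let $Q$ be a quasi-array of size $m$, let $\sigma$ be a composition of $m$, let $k\in\{1,\dots,m\}$, and let $T=\pi_\sigma(Q)$. Suppose the $k$-th diagonal of $Q$ meets $T$ in a cell containing the entry $\ell$. Then: (1) $C_k$ is defined on $Q$ if and only if $e_{\ell-1}$ is defined on $T$ and changes the symbol $\ell$ lying in the cell of $T$ on the $k$-th diagonal; in this case $e_{\ell-1}(T)=\pi_\sigma(C_k(Q))$. (2) $D_k$ is defined on $Q$ if and only if $f_{\ell}$ is defined on $T$ and changes the symbol $\ell$ lying in the cell of $T$ on the $k$-th diagonal; in this case $f_{\ell}(T)=\pi_\sigma(D_k(Q))$.
   Context: Entries are positive integers; rows are indexed top to bottom, columns left to right. A quasi-array of size $m$ is an array $Q$ with cells $(i,j)$, $1\le i\le m$, $1\le j\le m-i+1$, each containing a positive integer $Q_{(i,j)}$, such that $Q_{(1,j)}\le Q_{(1,j+1)}$ and $Q_{(i,j)}=Q_{(1,i+j-1)}+i-1$ for all cells. The $k$-th diagonal is the set of cells $(i,j)$ with $i+j-1=k$. Operators: $D_m$ is always defined on $Q$ of size $m$ and adds $1$ to every entry of the $m$-th diagonal; for $1\le k\le m-1$, $D_k$ is defined iff $Q_{(1,k)}<Q_{(1,k+1)}$, and then adds $1$ to all entries of the $k$-th diagonal; for $2\le k\le m$, $C_k$ is defined iff $Q_{(1,k)}>Q_{(1,k-1)}$, and then subtracts $1$ from all entries of the $k$-th diagonal; $C_1$ is defined iff $Q_{(1,1)}>1$, and then subtracts $1$ from $Q_{(1,1)}$. A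 quasi-ribbon diagram of shape $\sigma=(\sigma_1,\dots,\sigma_r)$ (a composition) has $\sigma_i$ cells in row $i$, with the leftmost cell of row $i+1$ directly below the rightmost cell of row $i$. A quasi-ribbon tableau is a filling of such a diagram with positive integers, weakly increasing along rows and strictly increasing down columns. For $\sigma$ a composition of $m$, $\pi_\sigma(Q)$ is the quasi-ribbon tableau obtained by taking the cells of $Q$ forming a quasi-ribbon diagram of shape $\sigma$ whose first cell is $(1,1)$ (so its cells lie one on each of the diagonals $1,\dots,m$), with the entries of $Q$. The column reading of a quasi-ribbon tableau is the word obtained by reading columns left to right, each column bottom to top; operators on tableaux act via their column readings, each letter of the word corresponding to a cell. Quasi-Kashiwara operators on a word $u$ over the positive integers, for $i\ge1$: if $u$ contains a (not necessarily consecutive) subsequence $(i+1)\,i$, both $e_i(u)$ and $f_i(u)$ are undefined; otherwise $e_i(u)$ is obtained by replacing the leftmost $i+1$ by $i$ (undefined if $u$ has no $i+1$), and $f_i(u)$ is obtained by replacing the rightmost $i$ by $i+1$ (undefined if $u$ has no $i$). $e_0$ is undefined. *)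

theory Defs
  imports Main
begin

definition is_cell :: "nat \<Rightarrow> nat \<Rightarrow> nat \<Rightarrow> bool" where
  "is_cell m i j \<longleftrightarrow> 1 \<le> i \<and> 1 \<le> j \<and> i + j \<le> m + 1"

definition quasi_array :: "nat \<Rightarrow> (nat \<Rightarrow> nat \<Rightarrow> nat) \<Rightarrow> bool" where
  "quasi_array m Q \<longleftrightarrow>
     (\<forall>i j. is_cell m i j \<longrightarrow> 0 < Q i j) \<and>
     (\<forall>j. 1 \<le> j \<and> j < m \<longrightarrow> Q 1 j \<le> Q 1 (j + 1)) \<and>
     (\<forall>i j. is_cell m i j \<longrightarrow> Q i j = Q 1 (i + j - 1) + i - 1) \<and>
     (\<forall>i j. \<not> is_cell m i j \<longrightarrow> Q i j = 0)"

definition diag_add :: "nat \<Rightarrow> nat \<Rightarrow> (nat \<Rightarrow> nat \<Rightarrow> nat) \<Rightarrow> nat \<Rightarrow> nat \<Rightarrow> nat" where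
  "diag_add m k Q = (\<lambda>i j. if is_cell m i j \<and> i + j - 1 = k then Q i j + 1 else Q i j)"

definition diag_sub :: "nat \<Rightarrow> nat \<Rightarrow> (nat \<Rightarrow> nat \<Rightarrow> nat) \<Rightarrow> nat \<Rightarrow> nat \<Rightarrow> nat" where
  "diag_sub m k Q = (\<lambda>i j. if is_cell m i j \<and> i + j - 1 = k then Q i j - 1 else Q i j)"

definition opD :: "nat \<Rightarrow> nat \<Rightarrow> (nat \<Rightarrow> nat \<Rightarrow> nat) \<Rightarrow> (nat \<Rightarrow> nat \<Rightarrow> nat) option" where
  "opD m k Q =
     (if k = m \<or> (1 \<le> k \<and> k < m \<and> Q 1 k < Q 1 (k + 1))
      then Some (diag_add m k Q) else None)"

definition opC :: "nat \<Rightarrow> nat \<Rightarrow> (nat \<Rightarrow> nat \<Rightarrow> nat) \<Rightarrow> (nat \<Rightarrow> nat \<Rightarrow> nat) option" where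
  "opC m k Q =
     (if (k = 1 \<and> 1 < Q 1 1) \<or> (2 \<le> k \<and> k \<le> m \<and> Q 1 (k - 1) < Q 1 k)
      then Some (diag_sub m k Q) else None)"

definition composition :: "nat list \<Rightarrow> nat \<Rightarrow> bool" where
  "composition \<sigma> m \<longleftrightarrow> (\<forall>s \<in> set \<sigma>. 0 < s) \<and> sum_list \<sigma> = m"

text \<open>The leftmost cell of
  row i+1 lies directly below the rightmost cell of row i.\<close>

fun ribbon_aux :: "nat \<Rightarrow> nat \<Rightarrow> nat list \<Rightarrow> (nat \<times> nat) list" where
  "ribbon_aux r c [] = []"
| "ribbon_aux r c (s # ss) = map (\<lambda>j. (r, j)) [c..<c + s] @ ribbon_aux (r + 1) (c + s - 1) ss"

definition ribbon_cells :: "nat list \<Rightarrow> (nat \<times> nat) list" where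
  "ribbon_cells \<sigma> = ribbon_aux 1 1 \<sigma>"

text \<open>Cells in column-reading order: columns left to right, each bottom to top.\<close>

definition col_cells :: "nat list \<Rightarrow> (nat \<times> nat) list" where
  "col_cells \<sigma> =
     concat (map (\<lambda>c. rev (filter (\<lambda>p. snd p = c) (ribbon_cells \<sigma>)))
                 [1..<length (ribbon_cells \<sigma>) + 1])"

definition pi_sigma :: "nat list \<Rightarrow> (nat \<Rightarrow> nat \<Rightarrow> nat) \<Rightarrow> nat \<times> nat \<Rightarrow> nat" where
  "pi_sigma \<sigma> Q = (\<lambda>p. if p \<in> set (ribbon_cells \<sigma>) then Q (fst p) (snd p) else 0)"

definition col_reading :: "nat list \<Rightarrow> (nat \<times> nat \<Rightarrow> nat) \<Rightarrow> nat list" where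
  "col_reading \<sigma> T = map T (col_cells \<sigma>)"

definition tab_of_reading :: "nat list \<Rightarrow> nat list \<Rightarrow> nat \<times> nat \<Rightarrow> nat" where
  "tab_of_reading \<sigma> w =
     (\<lambda>p. if p \<in> set (col_cells \<sigma>)
          then w ! (THE n. n < length (col_cells \<sigma>) \<and> col_cells \<sigma> ! n = p) else 0)"

definition has_inversion :: "nat \<Rightarrow> nat list \<Rightarrow> bool" where
  "has_inversion i u \<longleftrightarrow>
     (\<exists>p q. p < q \<and> q < length u \<and> u ! p = i + 1 \<and> u ! q = i)"

definition e_pos :: "nat \<Rightarrow> nat list \<Rightarrow> nat option" where
  "e_pos i u =
     (if i = 0 \<or> has_inversion i u \<or> i + 1 \<notin> set u then None
      else Some (LEAST p. p < length u \<and> u ! p = i + 1))"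

definition f_pos :: "nat \<Rightarrow> nat list \<Rightarrow> nat option" where
  "f_pos i u =
     (if i = 0 \<or> has_inversion i u \<or> i \<notin> set u then None
      else Some (GREATEST p. p < length u \<and> u ! p = i))"

definition e_word :: "nat \<Rightarrow> nat list \<Rightarrow> nat list option" where
  "e_word i u = map_option (\<lambda>p. u[p := i]) (e_pos i u)"

definition f_word :: "nat \<Rightarrow> nat list \<Rightarrow> nat list option" where
  "f_word i u = map_option (\<lambda>p. u[p := i + 1]) (f_pos i u)"

definition e_tab :: "nat list \<Rightarrow> nat \<Rightarrow> (nat \<times> nat \<Rightarrow> nat) \<Rightarrow> (nat \<times> nat \<Rightarrow> nat) option" where
  "e_tab \<sigma> i T = map_option (tab_of_reading \<sigma>) (e_word i (col_reading \<sigma> T))"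

definition f_tab :: "nat list \<Rightarrow> nat \<Rightarrow> (nat \<times> nat \<Rightarrow> nat) \<Rightarrow> (nat \<times> nat \<Rightarrow> nat) option" where
  "f_tab \<sigma> i T = map_option (tab_of_reading \<sigma>) (f_word i (col_reading \<sigma> T))"

end

theory Submission
  imports Defs
begin

text \<open>A ribbon cell in row i on the diagonal d carries the entry Q(1,d) + i - 1, and the
  ribbon moves weakly down and right; hence along the ribbon the entries grow at least by
  the row increments, and an entry l+1 read before an entry l in the column reading must
  sit directly below it. If C_k is defined, the first row jumps strictly between the
  diagonals k-1 and k, so every ribbon entry on an earlier diagonal is too small to
  obstruct e_(l-1) at the cell x on the k-th diagonal. If C_k is undefined and k > 1, the
  ribbon cell on diagonal k-1 is either an l immediately left of x (read before x) or an l-1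
  immediately above x (read after x): precisely the two obstructions to e_(l-1) changing
  x (for k = 1 it forces l = 1, and e_0 is undefined). The operators D_k and f_l are
  treated in the same way, using diagonal k+1.\<close>

lemma sorted_wrt_nth_iff_less:
  assumes "sorted_wrt P xs" "asymp P" "i < length xs" "j < length xs"
  shows "P (xs ! i) (xs ! j) \<longleftrightarrow> i < j"
  using assms sorted_wrt_nth_less[OF assms(1)] by (metis asympD linorder_neqE_nat)

lemma sorted_wrt_concat_map:
  assumes "sorted_wrt Q xs" "\<And>x. x \<in> set xs \<Longrightarrow> sorted_wrt P (g x)"
    and "\<And>x y a b. x \<in> set xs \<Longrightarrow> y \<in> set xs \<Longrightarrow> Q x y \<Longrightarrow>
      a \<in> set (g x) \<Longrightarrow> b \<in> set (g y) \<Longrightarrow> P a b"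
  shows "sorted_wrt P (concat (map g xs))"
  using assms
proof (induction xs)
  case Nil
  then show ?case by simp
next
  case (Cons x xs)
  have "sorted_wrt P (concat (map g xs))"
    using Cons.prems by (intro Cons.IH) (simp_all, blast)
  moreover have "P a b" if "a \<in> set (g x)" "b \<in> set (concat (map g xs))" for a b
  proof -
    from that(2) obtain y where y: "y \<in> set xs" "b \<in> set (g y)" by auto
    with Cons.prems(1) have "Q x y" by simp
    with y that(1) show ?thesis using Cons.prems(3)[of x y a b] by simp
  qed
  ultimately show ?case using Cons.prems(2) by (simp add: sorted_wrt_append)
qed

lemma sorted_wrt_asymp_imp_distinct: "sorted_wrt P xs \<Longrightarrow> asymp P \<Longrightarrow> distinct xs"
  by (induction xs) (auto dest: asympD)

lemma e_pos_eq_Some_iff: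
  "e_pos i u = Some p \<longleftrightarrow>
     0 < i \<and> \<not> has_inversion i u \<and> p < length u \<and> u ! p = i + 1 \<and> (\<forall>q<p. u ! q \<noteq> i + 1)"
  (is "_ \<longleftrightarrow> ?rhs")
proof
  assume "e_pos i u = Some p"
  then have pre: "0 < i" "\<not> has_inversion i u" "i + 1 \<in> set u"
    and p: "p = (LEAST p. p < length u \<and> u ! p = i + 1)"
    by (auto simp: e_pos_def split: if_splits)
  from pre(3) obtain p' where "p' < length u \<and> u ! p' = i + 1" by (auto simp: in_set_conv_nth)
  then have "p < length u \<and> u ! p = i + 1" unfolding p by (rule LeastI)
  moreover have "u ! q \<noteq> i + 1" if "q < p" for q
    using not_less_Least[of q "\<lambda>p. p < length u \<and> u ! p = i + 1"] that p calculation by auto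
  ultimately show ?rhs using pre by blast
next
  assume h: ?rhs
  then have "(LEAST p. p < length u \<and> u ! p = i + 1) = p"
    by (intro Least_equality) (auto simp: not_less[symmetric])
  with h show "e_pos i u = Some p" by (auto simp: e_pos_def in_set_conv_nth)
qed

lemma f_pos_eq_Some_iff:
  "f_pos i u = Some p \<longleftrightarrow>
     0 < i \<and> \<not> has_inversion i u \<and> p < length u \<and> u ! p = i \<and> (\<forall>q. p < q \<and> q < length u \<longrightarrow> u ! q \<noteq> i)"
  (is "_ \<longleftrightarrow> ?rhs")
proof
  assume "f_pos i u = Some p"
  then have pre: "0 < i" "\<not> has_inversion i u" "i \<in> set u"
    and p: "p = (GREATEST p. p < length u \<and> u ! p = i)"
    by (auto simp: f_pos_def split: if_splits)
  have bound: "q \<le> length u" if "q < length u \<and> u ! q = i" for q using that by simp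
  from pre(3) obtain p' where "p' < length u \<and> u ! p' = i" by (auto simp: in_set_conv_nth)
  then have "p < length u \<and> u ! p = i" unfolding p using bound by (rule GreatestI_nat)
  moreover have "u ! q \<noteq> i" if "p < q" "q < length u" for q
  proof
    assume "u ! q = i"
    then have "q \<le> p" unfolding p using that bound by (intro Greatest_le_nat[where b = "length u"]) auto
    with \<open>p < q\<close> show False by simp
  qed
  ultimately show ?rhs using pre by blast
next
  assume h: ?rhs
  then have "(GREATEST p. p < length u \<and> u ! p = i) = p"
    by (intro Greatest_equality) (auto simp: not_less[symmetric])
  with h show "f_pos i u = Some p" by (auto simp: f_pos_def in_set_conv_nth)
qed

lemma has_inversion_map_sorted_iff:
  assumes "sorted_wrt P cs" "asymp P"
  shows "has_inversion i (map T cs) \<longleftrightarrow> (\<exists>u\<in>set cs. \<exists>v\<in>set cs. P u v \<and> T u = i + 1 \<and> T v = i)"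
    (is "_ \<longleftrightarrow> ?rhs")
proof
  assume "has_inversion i (map T cs)"
  then obtain p q where pq: "p < q" "q < length cs" "T (cs ! p) = i + 1" "T (cs ! q) = i"
    by (auto simp: has_inversion_def)
  have "P (cs ! p) (cs ! q)" using pq(1,2) by (rule sorted_wrt_nth_less[OF assms(1)])
  moreover have "cs ! p \<in> set cs" "cs ! q \<in> set cs" using pq(1,2) by auto
  ultimately show ?rhs using pq(3,4) by blast
next
  assume ?rhs
  then obtain p q where pq: "p < length cs" "q < length cs" "P (cs ! p) (cs ! q)"
      "T (cs ! p) = i + 1" "T (cs ! q) = i"
    by (auto simp: in_set_conv_nth)
  then have "p < q" using sorted_wrt_nth_iff_less[OF assms] by blast
  with pq show "has_inversion i (map T cs)"
    unfolding has_inversion_def by (intro exI[of _ p] exI[of _ q]) simp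
qed

lemma e_pos_map_sorted_iff:
  assumes sorted: "sorted_wrt P cs" and asym: "asymp P" and x: "x \<in> set cs"
  shows "(\<exists>p. e_pos i (map T cs) = Some p \<and> cs ! p = x) \<longleftrightarrow>
     0 < i \<and> \<not> has_inversion i (map T cs) \<and> T x = i + 1 \<and> (\<forall>u\<in>set cs. P u x \<longrightarrow> T u \<noteq> i + 1)"
    (is "?lhs \<longleftrightarrow> ?rhs")
proof
  assume ?lhs
  then obtain p where "e_pos i (map T cs) = Some p" "cs ! p = x" by blast
  then have p: "0 < i" "\<not> has_inversion i (map T cs)" "p < length cs" "cs ! p = x" "T x = i + 1"
      "\<forall>q<p. T (cs ! q) \<noteq> i + 1"
    by (auto simp: e_pos_eq_Some_iff)
  have "T u \<noteq> i + 1" if "u \<in> set cs" "P u x" for u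
  proof -
    from that(1) obtain q where q: "q < length cs" "u = cs ! q" by (auto simp: in_set_conv_nth)
    with p(3,4) that(2) have "q < p" using sorted_wrt_nth_iff_less[OF sorted asym] by blast
    with p(6) q(2) show ?thesis by blast
  qed
  with p show ?rhs by blast
next
  assume h: ?rhs
  from x obtain p where p: "p < length cs" "cs ! p = x" by (auto simp: in_set_conv_nth)
  have "T (cs ! q) \<noteq> i + 1" if "q < p" for q
  proof -
    have "P (cs ! q) x" using sorted_wrt_nth_less[OF sorted that p(1)] p(2) by simp
    with h that p(1) show ?thesis by simp
  qed
  with h p have "e_pos i (map T cs) = Some p" by (simp add: e_pos_eq_Some_iff)
  with p show ?lhs by blast
qed

lemma f_pos_map_sorted_iff:
  assumes sorted: "sorted_wrt P cs" and asym: "asymp P" and x: "x \<in> set cs"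
  shows "(\<exists>p. f_pos i (map T cs) = Some p \<and> cs ! p = x) \<longleftrightarrow>
     0 < i \<and> \<not> has_inversion i (map T cs) \<and> T x = i \<and> (\<forall>u\<in>set cs. P x u \<longrightarrow> T u \<noteq> i)"
    (is "?lhs \<longleftrightarrow> ?rhs")
proof
  assume ?lhs
  then obtain p where "f_pos i (map T cs) = Some p" "cs ! p = x" by blast
  then have p: "0 < i" "\<not> has_inversion i (map T cs)" "p < length cs" "cs ! p = x" "T x = i"
      "\<forall>q. p < q \<and> q < length cs \<longrightarrow> T (cs ! q) \<noteq> i"
    by (auto simp: f_pos_eq_Some_iff)
  have "T u \<noteq> i" if "u \<in> set cs" "P x u" for u
  proof -
    from that(1) obtain q where q: "q < length cs" "u = cs ! q" by (auto simp: in_set_conv_nth)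
    with p(3,4) that(2) have "p < q" using sorted_wrt_nth_iff_less[OF sorted asym] by blast
    with p(6) q show ?thesis by blast
  qed
  with p show ?rhs by blast
next
  assume h: ?rhs
  from x obtain p where p: "p < length cs" "cs ! p = x" by (auto simp: in_set_conv_nth)
  have "T (cs ! q) \<noteq> i" if "p < q" "q < length cs" for q
  proof -
    have "P x (cs ! q)" using sorted_wrt_nth_less[OF sorted that] p(2) by simp
    with h that(2) show ?thesis by simp
  qed
  with h p have "f_pos i (map T cs) = Some p" by (simp add: f_pos_eq_Some_iff)
  with p show ?lhs by blast
qed

lemma length_ribbon_aux: "length (ribbon_aux r c \<sigma>) = sum_list \<sigma>"
  by (induction \<sigma> arbitrary: r c) auto

lemma ribbon_aux_lower_bounds:
  assumes "\<forall>s\<in>set \<sigma>. 0 < s" "x \<in> set (ribbon_aux r c \<sigma>)"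
  shows "r \<le> fst x \<and> c \<le> snd x"
  using assms by (induction \<sigma> arbitrary: r c) force+

lemma ribbon_aux_nth_diagonal:
  assumes "\<forall>s\<in>set \<sigma>. 0 < s" "n < length (ribbon_aux r c \<sigma>)"
  shows "fst (ribbon_aux r c \<sigma> ! n) + snd (ribbon_aux r c \<sigma> ! n) = r + c + n"
  using assms
proof (induction \<sigma> arbitrary: r c n)
  case Nil
  then show ?case by simp
next
  case (Cons s ss)
  show ?case
  proof (cases "n < s")
    case True
    then show ?thesis by (simp add: nth_append)
  next
    case False
    with Cons.prems have "0 < s" "n - s < length (ribbon_aux (r + 1) (c + s - 1) ss)"
      by (auto simp: length_ribbon_aux)
    with Cons.IH[where r = "r + 1" and c = "c + s - 1" and n = "n - s"] Cons.prems False show ?thesis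
      by (simp add: nth_append length_ribbon_aux)
  qed
qed

lemma sorted_ribbon_aux:
  assumes "\<forall>s\<in>set \<sigma>. 0 < s"
  shows "sorted_wrt (\<lambda>a b. fst a \<le> fst b \<and> snd a \<le> snd b) (ribbon_aux r c \<sigma>)"
  using assms
proof (induction \<sigma> arbitrary: r c)
  case Nil
  then show ?case by simp
next
  case (Cons s ss)
  have "fst a \<le> fst b \<and> snd a \<le> snd b"
    if "a \<in> set (map (\<lambda>j. (r, j)) [c..<c + s])" "b \<in> set (ribbon_aux (r + 1) (c + s - 1) ss)" for a b
    using that ribbon_aux_lower_bounds[of ss b "r + 1" "c + s - 1"] Cons.prems by fastforce
  with Cons show ?case by (simp add: sorted_wrt_append sorted_wrt_map)
qed

definition reads_before :: "nat \<times> nat \<Rightarrow> nat \<times> nat \<Rightarrow> bool" where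
  "reads_before u v \<longleftrightarrow> snd u < snd v \<or> (snd u = snd v \<and> fst v < fst u)"

lemma asymp_reads_before: "asymp reads_before"
  unfolding asymp_on_def reads_before_def by auto

context
  fixes \<sigma> :: "nat list" and m :: nat
  assumes composition: "composition \<sigma> m"
begin

lemma length_ribbon_cells: "length (ribbon_cells \<sigma>) = m"
  using composition by (simp add: composition_def ribbon_cells_def length_ribbon_aux)

lemma ribbon_cells_nth_diagonal:
  "n < m \<Longrightarrow> fst (ribbon_cells \<sigma> ! n) + snd (ribbon_cells \<sigma> ! n) = n + 2"
  using composition ribbon_aux_nth_diagonal[of \<sigma> n 1 1] length_ribbon_cells
  by (simp add: composition_def ribbon_cells_def)

lemma ribbon_cell_is_cell:
  assumes "x \<in> set (ribbon_cells \<sigma>)"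
  shows "is_cell m (fst x) (snd x)"
proof -
  from assms obtain n where "n < m" "x = ribbon_cells \<sigma> ! n"
    by (auto simp: in_set_conv_nth length_ribbon_cells)
  moreover have "1 \<le> fst x \<and> 1 \<le> snd x"
    using assms composition ribbon_aux_lower_bounds[of \<sigma> x 1 1]
    by (simp add: composition_def ribbon_cells_def)
  ultimately show ?thesis using ribbon_cells_nth_diagonal by (auto simp: is_cell_def)
qed

lemma ribbon_cells_mono:
  assumes "x \<in> set (ribbon_cells \<sigma>)" "y \<in> set (ribbon_cells \<sigma>)"
    and "fst x + snd x \<le> fst y + snd y"
  shows "fst x \<le> fst y \<and> snd x \<le> snd y"
proof -
  obtain i j where ij: "i < m" "x = ribbon_cells \<sigma> ! i" "j < m" "y = ribbon_cells \<sigma> ! j"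
    using assms(1,2) by (auto simp: in_set_conv_nth length_ribbon_cells)
  with assms(3) have "i \<le> j" using ribbon_cells_nth_diagonal by simp
  moreover have "sorted_wrt (\<lambda>a b. fst a \<le> fst b \<and> snd a \<le> snd b) (ribbon_cells \<sigma>)"
    using composition sorted_ribbon_aux by (simp add: composition_def ribbon_cells_def)
  ultimately show ?thesis
    using ij by (cases "i = j") (auto simp: sorted_wrt_iff_nth_less length_ribbon_cells)
qed

lemma ribbon_cells_diagonal_unique:
  assumes "x \<in> set (ribbon_cells \<sigma>)" "y \<in> set (ribbon_cells \<sigma>)"
    and "fst x + snd x = fst y + snd y"
  shows "x = y"
  using ribbon_cells_mono[OF assms(1,2)] ribbon_cells_mono[OF assms(2,1)] assms(3)
  by (simp add: prod_eq_iff)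

lemma ribbon_cells_diagonal_exists:
  assumes "2 \<le> d" "d \<le> m + 1"
  shows "\<exists>x\<in>set (ribbon_cells \<sigma>). fst x + snd x = d"
proof
  show "ribbon_cells \<sigma> ! (d - 2) \<in> set (ribbon_cells \<sigma>)"
    using assms by (simp add: length_ribbon_cells)
  show "fst (ribbon_cells \<sigma> ! (d - 2)) + snd (ribbon_cells \<sigma> ! (d - 2)) = d"
    using assms ribbon_cells_nth_diagonal[of "d - 2"] by simp
qed

lemma ribbon_cells_next_diagonal:
  assumes "x \<in> set (ribbon_cells \<sigma>)" "y \<in> set (ribbon_cells \<sigma>)"
    and "fst y + snd y = fst x + snd x + 1"
  shows "(fst y = fst x \<and> snd y = snd x + 1) \<or> (fst y = fst x + 1 \<and> snd y = snd x)"
  using ribbon_cells_mono[OF assms(1,2)] assms(3) by linarith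

lemma sorted_ribbon_cells_diagonal:
  "sorted_wrt (\<lambda>a b. fst a + snd a < fst b + snd b) (ribbon_cells \<sigma>)"
  using ribbon_cells_nth_diagonal by (simp add: sorted_wrt_iff_nth_less length_ribbon_cells)

lemma set_col_cells: "set (col_cells \<sigma>) = set (ribbon_cells \<sigma>)"
proof -
  have "snd x \<in> set [1..<length (ribbon_cells \<sigma>) + 1]" if "x \<in> set (ribbon_cells \<sigma>)" for x
    using ribbon_cell_is_cell[OF that] by (auto simp: is_cell_def length_ribbon_cells)
  then show ?thesis by (auto simp: col_cells_def)
qed

lemma sorted_col_cells: "sorted_wrt reads_before (col_cells \<sigma>)"
  unfolding col_cells_def
proof (rule sorted_wrt_concat_map[OF sorted_wrt_upt])
  fix c
  show "sorted_wrt reads_before (rev (filter (\<lambda>p. snd p = c) (ribbon_cells \<sigma>)))"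
    unfolding sorted_wrt_rev
    by (rule sorted_wrt_mono_rel[OF _ sorted_wrt_filter[OF sorted_ribbon_cells_diagonal]])
      (auto simp: reads_before_def)
qed (auto simp: reads_before_def)

lemma distinct_col_cells: "distinct (col_cells \<sigma>)"
  using sorted_col_cells asymp_reads_before by (rule sorted_wrt_asymp_imp_distinct)

lemma tab_of_reading_update:
  assumes "p < length (col_cells \<sigma>)" and "\<forall>z. z \<notin> set (ribbon_cells \<sigma>) \<longrightarrow> T z = 0"
  shows "tab_of_reading \<sigma> ((col_reading \<sigma> T)[p := v]) = T(col_cells \<sigma> ! p := v)"
proof
  fix z
  show "tab_of_reading \<sigma> ((col_reading \<sigma> T)[p := v]) z = (T(col_cells \<sigma> ! p := v)) z"
  proof (cases "z \<in> set (col_cells \<sigma>)")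
    case True
    then obtain q where q: "q < length (col_cells \<sigma>)" "z = col_cells \<sigma> ! q"
      by (auto simp: in_set_conv_nth)
    then have "(THE n. n < length (col_cells \<sigma>) \<and> col_cells \<sigma> ! n = z) = q"
      using distinct_col_cells by (auto simp: nth_eq_iff_index_eq)
    with q assms(1) distinct_col_cells show ?thesis
      by (auto simp: tab_of_reading_def col_reading_def nth_eq_iff_index_eq)
  next
    case False
    then have "z \<noteq> col_cells \<sigma> ! p" using assms(1) by auto
    moreover have "T z = 0" using False assms(2) set_col_cells by blast
    ultimately show ?thesis using False by (simp add: tab_of_reading_def)
  qed
qed

lemma pi_sigma_diagonal_update:
  assumes x: "x \<in> set (ribbon_cells \<sigma>)" "fst x + snd x = k + 1"
  shows "pi_sigma \<sigma> (\<lambda>i j. if is_cell m i j \<and> i + j - 1 = k then g (Q i j) else Q i j)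
       = (pi_sigma \<sigma> Q)(x := g (Q (fst x) (snd x)))" (is "pi_sigma \<sigma> ?Q' = _")
proof
  fix z
  show "pi_sigma \<sigma> ?Q' z = ((pi_sigma \<sigma> Q)(x := g (Q (fst x) (snd x)))) z"
  proof (cases "z \<in> set (ribbon_cells \<sigma>)")
    case True
    have "fst z + snd z - 1 = k \<longleftrightarrow> z = x"
      using ribbon_cells_diagonal_unique[OF True x(1)] ribbon_cell_is_cell[OF True] x(2)
      by (auto simp: is_cell_def)
    with True ribbon_cell_is_cell[OF True] show ?thesis by (auto simp: pi_sigma_def)
  next
    case False
    with x(1) show ?thesis by (auto simp: pi_sigma_def)
  qed
qed

lemma has_inversion_col_reading_iff:
  "has_inversion i (col_reading \<sigma> T) \<longleftrightarrow>
     (\<exists>u\<in>set (ribbon_cells \<sigma>). \<exists>v\<in>set (ribbon_cells \<sigma>). reads_before u v \<and> T u = i + 1 \<and> T v = i)"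
  using has_inversion_map_sorted_iff[OF sorted_col_cells asymp_reads_before] set_col_cells
  by (simp add: col_reading_def)

lemma e_pos_col_reading_iff:
  assumes "x \<in> set (ribbon_cells \<sigma>)"
  shows "(\<exists>p. e_pos i (col_reading \<sigma> T) = Some p \<and> col_cells \<sigma> ! p = x) \<longleftrightarrow>
     0 < i \<and> T x = i + 1
     \<and> \<not> (\<exists>u\<in>set (ribbon_cells \<sigma>). \<exists>v\<in>set (ribbon_cells \<sigma>). reads_before u v \<and> T u = i + 1 \<and> T v = i)
     \<and> (\<forall>u\<in>set (ribbon_cells \<sigma>). reads_before u x \<longrightarrow> T u \<noteq> i + 1)"
  using e_pos_map_sorted_iff[OF sorted_col_cells asymp_reads_before, of x i T]
    has_inversion_col_reading_iff set_col_cells assms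
  by (auto simp: col_reading_def)

lemma f_pos_col_reading_iff:
  assumes "x \<in> set (ribbon_cells \<sigma>)"
  shows "(\<exists>p. f_pos i (col_reading \<sigma> T) = Some p \<and> col_cells \<sigma> ! p = x) \<longleftrightarrow>
     0 < i \<and> T x = i
     \<and> \<not> (\<exists>u\<in>set (ribbon_cells \<sigma>). \<exists>v\<in>set (ribbon_cells \<sigma>). reads_before u v \<and> T u = i + 1 \<and> T v = i)
     \<and> (\<forall>u\<in>set (ribbon_cells \<sigma>). reads_before x u \<longrightarrow> T u \<noteq> i)"
  using f_pos_map_sorted_iff[OF sorted_col_cells asymp_reads_before, of x i T]
    has_inversion_col_reading_iff set_col_cells assms
  by (auto simp: col_reading_def)

end

lemma quasi_array_entry:
  assumes "quasi_array m Q" "is_cell m i j"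
  shows "Q i j + 1 = Q 1 (i + j - 1) + i"
  using assms by (auto simp: quasi_array_def is_cell_def)

lemma quasi_array_pos: "quasi_array m Q \<Longrightarrow> is_cell m i j \<Longrightarrow> 0 < Q i j"
  unfolding quasi_array_def by blast

lemma quasi_array_first_row_mono:
  assumes "quasi_array m Q" "1 \<le> a" "a \<le> b" "b \<le> m"
  shows "Q 1 a \<le> Q 1 b"
  using assms(3,4)
proof (induction b rule: dec_induct)
  case base
  then show ?case by simp
next
  case (step n)
  with assms(1,2) have "Q 1 n \<le> Q 1 (n + 1)" by (simp add: quasi_array_def)
  with step show ?case by simp
qed

locale ribbon_of_quasi_array =
  fixes m :: nat and Q :: "nat \<Rightarrow> nat \<Rightarrow> nat" and \<sigma> :: "nat list"
  assumes quasi_array: "quasi_array m Q" and composition: "composition \<sigma> m"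
begin

abbreviation cells :: "(nat \<times> nat) set" where
  "cells \<equiv> set (ribbon_cells \<sigma>)"

abbreviation tab :: "nat \<times> nat \<Rightarrow> nat" where
  "tab \<equiv> pi_sigma \<sigma> Q"

lemma tab_cell:
  assumes "u \<in> cells"
  shows "tab u + 1 = Q 1 (fst u + snd u - 1) + fst u"
  using assms quasi_array_entry[OF quasi_array ribbon_cell_is_cell[OF composition assms]]
  by (simp add: pi_sigma_def)

lemma tab_pos: "u \<in> cells \<Longrightarrow> 0 < tab u"
  using quasi_array_pos[OF quasi_array ribbon_cell_is_cell[OF composition]]
  by (simp add: pi_sigma_def)

lemma first_row_mono_on_cells:
  assumes "u \<in> cells" "v \<in> cells" "fst u + snd u \<le> fst v + snd v"
  shows "Q 1 (fst u + snd u - 1) \<le> Q 1 (fst v + snd v - 1)"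
  using assms(3) ribbon_cell_is_cell[OF composition assms(1)] ribbon_cell_is_cell[OF composition assms(2)]
  by (intro quasi_array_first_row_mono[OF quasi_array]) (auto simp: is_cell_def)

lemma tab_mono:
  assumes "u \<in> cells" "v \<in> cells" "fst u + snd u \<le> fst v + snd v"
  shows "tab u + fst v \<le> tab v + fst u"
  using first_row_mono_on_cells[OF assms] tab_cell[OF assms(1)] tab_cell[OF assms(2)] by linarith

lemma reads_before_if_equal_tab:
  assumes "u \<in> cells" "v \<in> cells" "fst u + snd u < fst v + snd v" "tab u = tab v"
  shows "reads_before u v"
  using tab_mono[OF assms(1,2)] ribbon_cells_mono[OF composition assms(1,2)] assms(3,4)
  by (simp add: reads_before_def)

lemma inversion_is_vertical_domino:
  assumes u: "u \<in> cells" and v: "v \<in> cells" and "reads_before u v" "tab u = tab v + 1"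
  shows "snd u = snd v \<and> fst u = fst v + 1"
proof -
  have "\<not> fst u + snd u \<le> fst v + snd v"
  proof
    assume le: "fst u + snd u \<le> fst v + snd v"
    show False using tab_mono[OF u v le] ribbon_cells_mono[OF composition u v le] assms(4) by simp
  qed
  then show ?thesis
    using tab_mono[OF v u] ribbon_cells_mono[OF composition v u] assms(3,4)
    by (auto simp: reads_before_def)
qed

context
  fixes k :: nat and x :: "nat \<times> nat"
  assumes x: "x \<in> cells" and diagonal_x: "fst x + snd x = k + 1"
begin

lemma k_le_m: "k \<le> m"
  using ribbon_cell_is_cell[OF composition x] diagonal_x by (simp add: is_cell_def)

lemma tab_below_diagonal_if_opC:
  assumes C: "opC m k Q \<noteq> None" and u: "u \<in> cells" "fst u + snd u < fst x + snd x"
  shows "tab u + fst x < tab x + fst u"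
proof -
  have "2 \<le> fst u + snd u" using ribbon_cell_is_cell[OF composition u(1)] by (simp add: is_cell_def)
  with u(2) diagonal_x have k: "2 \<le> k" by simp
  with C have "Q 1 (k - 1) < Q 1 k" by (simp add: opC_def split: if_splits)
  moreover have "Q 1 (fst u + snd u - 1) \<le> Q 1 (k - 1)"
    using ribbon_cell_is_cell[OF composition u(1)] u(2) diagonal_x k_le_m
    by (intro quasi_array_first_row_mono[OF quasi_array]) (auto simp: is_cell_def)
  ultimately show ?thesis using tab_cell[OF u(1)] tab_cell[OF x] diagonal_x by simp
qed

lemma tab_above_diagonal_if_opD:
  assumes D: "opD m k Q \<noteq> None" and v: "v \<in> cells" "fst x + snd x < fst v + snd v"
  shows "tab x + fst v < tab v + fst x"
proof -
  have "fst v + snd v \<le> m + 1" using ribbon_cell_is_cell[OF composition v(1)] by (simp add: is_cell_def)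
  with v(2) diagonal_x have k: "k < m" by simp
  with D have "Q 1 k < Q 1 (k + 1)" by (simp add: opD_def split: if_splits)
  moreover have "Q 1 (k + 1) \<le> Q 1 (fst v + snd v - 1)"
    using ribbon_cell_is_cell[OF composition v(1)] v(2) diagonal_x
    by (intro quasi_array_first_row_mono[OF quasi_array]) (auto simp: is_cell_def)
  ultimately show ?thesis using tab_cell[OF v(1)] tab_cell[OF x] diagonal_x by simp
qed

lemma e_conditions_if_opC:
  assumes C: "opC m k Q \<noteq> None"
  shows "2 \<le> tab x"
    and "u \<in> cells \<Longrightarrow> reads_before u x \<Longrightarrow> tab u \<noteq> tab x"
    and "u \<in> cells \<Longrightarrow> v \<in> cells \<Longrightarrow> reads_before u v \<Longrightarrow> tab u = tab x \<Longrightarrow> tab v + 1 \<noteq> tab x"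
proof -
  show "2 \<le> tab x"
  proof (cases "k = 1")
    case True
    with C have "1 < Q 1 1" by (simp add: opC_def split: if_splits)
    moreover have "fst x = 1" using True diagonal_x ribbon_cell_is_cell[OF composition x]
      by (simp add: is_cell_def)
    ultimately show ?thesis using tab_cell[OF x] diagonal_x True by simp
  next
    case False
    have "1 \<le> k" using diagonal_x ribbon_cell_is_cell[OF composition x] by (simp add: is_cell_def)
    with False k_le_m obtain y where y: "y \<in> cells" "fst y + snd y = k"
      using ribbon_cells_diagonal_exists[OF composition, of k] by auto
    with diagonal_x have "fst y \<le> fst x" using ribbon_cells_mono[OF composition y(1) x] by simp
    then show ?thesis
      using tab_below_diagonal_if_opC[OF C y(1)] y(2) diagonal_x tab_pos[OF y(1)] by simp
  qed
next
  assume u: "u \<in> cells" and before: "reads_before u x"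
  show "tab u \<noteq> tab x"
  proof
    assume eq: "tab u = tab x"
    consider "fst u + snd u < fst x + snd x" | "fst u + snd u = fst x + snd x"
      | "fst x + snd x < fst u + snd u" by linarith
    then show False
    proof cases
      case 1
      then show False
        using tab_below_diagonal_if_opC[OF C u 1] ribbon_cells_mono[OF composition u x] eq by simp
    next
      case 2
      then show False
        using ribbon_cells_diagonal_unique[OF composition u x] before asymp_reads_before
        by (auto dest: asympD)
    next
      case 3
      then show False
        using reads_before_if_equal_tab[OF x u] eq before asymp_reads_before by (auto dest: asympD)
    qed
  qed
next
  assume u: "u \<in> cells" and v: "v \<in> cells" and before: "reads_before u v" and eq: "tab u = tab x"
  show "tab v + 1 \<noteq> tab x"
  proof
    assume "tab v + 1 = tab x"
    with eq have domino: "snd u = snd v" "fst u = fst v + 1"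
      using inversion_is_vertical_domino[OF u v before] by simp_all
    consider "fst u + snd u < fst x + snd x" | "u = x"
      | "fst x + snd x \<le> fst v + snd v"
      using ribbon_cells_diagonal_unique[OF composition u x] domino by linarith
    then show False
    proof cases
      case 1
      then show False
        using tab_below_diagonal_if_opC[OF C u 1] ribbon_cells_mono[OF composition u x] eq by simp
    next
      case 2
      then show False
        using tab_below_diagonal_if_opC[OF C v] domino \<open>tab v + 1 = tab x\<close> by simp
    next
      case 3
      then show False
        using tab_mono[OF x v 3] ribbon_cells_mono[OF composition x v 3] \<open>tab v + 1 = tab x\<close> by simp
    qed
  qed
qed

lemma opC_defined_if_e_conditions:
  assumes "2 \<le> tab x"
    and no_earlier: "\<forall>u\<in>cells. reads_before u x \<longrightarrow> tab u \<noteq> tab x"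
    and no_inversion: "\<forall>u\<in>cells. \<forall>v\<in>cells. reads_before u v \<longrightarrow> tab u = tab x \<longrightarrow> tab v + 1 \<noteq> tab x"
  shows "opC m k Q \<noteq> None"
proof (rule ccontr)
  assume "\<not> opC m k Q \<noteq> None"
  then have undefined: "\<not> (k = 1 \<and> 1 < Q 1 1)" "2 \<le> k \<Longrightarrow> \<not> Q 1 (k - 1) < Q 1 k"
    using k_le_m by (auto simp: opC_def split: if_splits)
  show False
  proof (cases "k = 1")
    case True
    then have "fst x = 1" using diagonal_x ribbon_cell_is_cell[OF composition x]
      by (simp add: is_cell_def)
    then show False using tab_cell[OF x] diagonal_x True undefined(1) assms(1) by simp
  next
    case False
    with diagonal_x ribbon_cell_is_cell[OF composition x] have "2 \<le> k" by (simp add: is_cell_def)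
    then obtain y where y: "y \<in> cells" "fst y + snd y = k"
      using ribbon_cells_diagonal_exists[OF composition, of k] k_le_m by auto
    have "Q 1 (k - 1) \<le> Q 1 k"
      using \<open>2 \<le> k\<close> k_le_m by (intro quasi_array_first_row_mono[OF quasi_array]) auto
    with undefined(2)[OF \<open>2 \<le> k\<close>] have flat: "Q 1 (k - 1) = Q 1 k" by simp
    have tab_y: "tab y + fst x = tab x + fst y"
      using tab_cell[OF x] tab_cell[OF y(1)] diagonal_x y(2) flat by simp
    have "(fst x = fst y \<and> snd x = snd y + 1) \<or> (fst x = fst y + 1 \<and> snd x = snd y)"
      using ribbon_cells_next_diagonal[OF composition y(1) x] diagonal_x y(2) by simp
    then show False
    proof (elim disjE conjE)
      assume "fst x = fst y" "snd x = snd y + 1"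
      then have "reads_before y x" "tab y = tab x" using tab_y by (simp_all add: reads_before_def)
      with no_earlier y(1) show False by blast
    next
      assume "fst x = fst y + 1" "snd x = snd y"
      then have "reads_before x y" "tab y + 1 = tab x" using tab_y by (simp_all add: reads_before_def)
      with no_inversion x y(1) show False by blast
    qed
  qed
qed

lemma f_conditions_if_opD:
  assumes D: "opD m k Q \<noteq> None"
  shows "u \<in> cells \<Longrightarrow> reads_before x u \<Longrightarrow> tab u \<noteq> tab x"
    and "u \<in> cells \<Longrightarrow> v \<in> cells \<Longrightarrow> reads_before u v \<Longrightarrow> tab v = tab x \<Longrightarrow> tab u \<noteq> tab x + 1"
proof -
  assume u: "u \<in> cells" and before: "reads_before x u"
  show "tab u \<noteq> tab x"
  proof
    assume eq: "tab u = tab x"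
    consider "fst u + snd u < fst x + snd x" | "fst u + snd u = fst x + snd x"
      | "fst x + snd x < fst u + snd u" by linarith
    then show False
    proof cases
      case 1
      then show False
        using reads_before_if_equal_tab[OF u x] eq before asymp_reads_before by (auto dest: asympD)
    next
      case 2
      then show False
        using ribbon_cells_diagonal_unique[OF composition u x] before asymp_reads_before
        by (auto dest: asympD)
    next
      case 3
      then show False
        using tab_above_diagonal_if_opD[OF D u 3] ribbon_cells_mono[OF composition x u] eq by simp
    qed
  qed
next
  assume u: "u \<in> cells" and v: "v \<in> cells" and before: "reads_before u v" and eq: "tab v = tab x"
  show "tab u \<noteq> tab x + 1"
  proof
    assume "tab u = tab x + 1"
    with eq have domino: "snd u = snd v" "fst u = fst v + 1"
      using inversion_is_vertical_domino[OF u v before] by simp_all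
    consider "fst u + snd u \<le> fst x + snd x" | "v = x"
      | "fst x + snd x < fst v + snd v"
      using ribbon_cells_diagonal_unique[OF composition v x] domino by linarith
    then show False
    proof cases
      case 1
      then show False
        using tab_mono[OF u x 1] ribbon_cells_mono[OF composition u x 1] \<open>tab u = tab x + 1\<close> by simp
    next
      case 2
      then show False
        using tab_above_diagonal_if_opD[OF D u] domino \<open>tab u = tab x + 1\<close> by simp
    next
      case 3
      then show False
        using tab_above_diagonal_if_opD[OF D v 3] ribbon_cells_mono[OF composition x v] eq by simp
    qed
  qed
qed

lemma opD_defined_if_f_conditions:
  assumes no_later: "\<forall>u\<in>cells. reads_before x u \<longrightarrow> tab u \<noteq> tab x"
    and no_inversion: "\<forall>u\<in>cells. \<forall>v\<in>cells. reads_before u v \<longrightarrow> tab v = tab x \<longrightarrow> tab u \<noteq> tab x + 1"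
  shows "opD m k Q \<noteq> None"
proof (rule ccontr)
  assume "\<not> opD m k Q \<noteq> None"
  then have k: "k < m" and undefined: "\<not> Q 1 k < Q 1 (k + 1)"
    using k_le_m diagonal_x ribbon_cell_is_cell[OF composition x]
    by (auto simp: opD_def is_cell_def split: if_splits)
  obtain z where z: "z \<in> cells" "fst z + snd z = k + 2"
    using ribbon_cells_diagonal_exists[OF composition, of "k + 2"] k by auto
  have "1 \<le> k" using diagonal_x ribbon_cell_is_cell[OF composition x] by (simp add: is_cell_def)
  then have "Q 1 k \<le> Q 1 (k + 1)"
    using k by (intro quasi_array_first_row_mono[OF quasi_array]) auto
  with undefined have flat: "Q 1 k = Q 1 (k + 1)" by simp
  have tab_z: "tab x + fst z = tab z + fst x"
    using tab_cell[OF x] tab_cell[OF z(1)] diagonal_x z(2) flat by simp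
  have "(fst z = fst x \<and> snd z = snd x + 1) \<or> (fst z = fst x + 1 \<and> snd z = snd x)"
    using ribbon_cells_next_diagonal[OF composition x z(1)] diagonal_x z(2) by simp
  then show False
  proof (elim disjE conjE)
    assume "fst z = fst x" "snd z = snd x + 1"
    then have "reads_before x z" "tab z = tab x" using tab_z by (simp_all add: reads_before_def)
    with no_later z(1) show False by blast
  next
    assume "fst z = fst x + 1" "snd z = snd x"
    then have "reads_before z x" "tab z = tab x + 1" using tab_z by (simp_all add: reads_before_def)
    with no_inversion x z(1) show False by blast
  qed
qed

lemma tab_x: "tab x = Q (fst x) (snd x)"
  using x by (simp add: pi_sigma_def)

lemma opC_defined_iff_e_pos:
  "opC m k Q \<noteq> None \<longleftrightarrow> (\<exists>p. e_pos (tab x - 1) (col_reading \<sigma> tab) = Some p \<and> col_cells \<sigma> ! p = x)"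
  (is "_ \<longleftrightarrow> ?acts_at_x")
proof
  assume C: "opC m k Q \<noteq> None"
  show ?acts_at_x
    using e_conditions_if_opC[OF C]
    unfolding e_pos_col_reading_iff[OF composition x] by fastforce
next
  assume ?acts_at_x
  then have "2 \<le> tab x" and no_earlier: "\<forall>u\<in>cells. reads_before u x \<longrightarrow> tab u \<noteq> tab x"
    and no_inversion: "\<not> (\<exists>u\<in>cells. \<exists>v\<in>cells. reads_before u v \<and> tab u = tab x \<and> tab v = tab x - 1)"
    unfolding e_pos_col_reading_iff[OF composition x] by auto
  have "\<forall>u\<in>cells. \<forall>v\<in>cells. reads_before u v \<longrightarrow> tab u = tab x \<longrightarrow> tab v + 1 \<noteq> tab x"
    using no_inversion by force
  with \<open>2 \<le> tab x\<close> no_earlier show "opC m k Q \<noteq> None" by (rule opC_defined_if_e_conditions)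
qed

lemma opD_defined_iff_f_pos:
  "opD m k Q \<noteq> None \<longleftrightarrow> (\<exists>p. f_pos (tab x) (col_reading \<sigma> tab) = Some p \<and> col_cells \<sigma> ! p = x)"
  (is "_ \<longleftrightarrow> ?acts_at_x")
proof
  assume D: "opD m k Q \<noteq> None"
  show ?acts_at_x
    using f_conditions_if_opD[OF D] tab_pos[OF x]
    unfolding f_pos_col_reading_iff[OF composition x] by fastforce
next
  assume ?acts_at_x
  then show "opD m k Q \<noteq> None"
    unfolding f_pos_col_reading_iff[OF composition x]
    by (intro opD_defined_if_f_conditions) auto
qed

lemma e_tab_opC:
  assumes "opC m k Q = Some Q'"
  shows "e_tab \<sigma> (tab x - 1) tab = Some (pi_sigma \<sigma> Q')"
proof -
  from assms obtain p where p: "e_pos (tab x - 1) (col_reading \<sigma> tab) = Some p" "col_cells \<sigma> ! p = x"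
    using opC_defined_iff_e_pos by auto
  then have "p < length (col_cells \<sigma>)" by (simp add: e_pos_eq_Some_iff col_reading_def)
  have "e_tab \<sigma> (tab x - 1) tab = Some (tab_of_reading \<sigma> ((col_reading \<sigma> tab)[p := tab x - 1]))"
    using p(1) by (simp add: e_tab_def e_word_def)
  also have "tab_of_reading \<sigma> ((col_reading \<sigma> tab)[p := tab x - 1]) = tab(x := tab x - 1)"
    using tab_of_reading_update[OF composition \<open>p < length (col_cells \<sigma>)\<close>] p(2)
    by (simp add: pi_sigma_def)
  also have "\<dots> = pi_sigma \<sigma> Q'"
    using assms pi_sigma_diagonal_update[OF composition x diagonal_x, of "\<lambda>a. a - 1" Q]
    by (simp add: opC_def diag_sub_def tab_x split: if_splits)
  finally show ?thesis .
qed

lemma f_tab_opD: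
  assumes "opD m k Q = Some Q'"
  shows "f_tab \<sigma> (tab x) tab = Some (pi_sigma \<sigma> Q')"
proof -
  from assms obtain p where p: "f_pos (tab x) (col_reading \<sigma> tab) = Some p" "col_cells \<sigma> ! p = x"
    using opD_defined_iff_f_pos by auto
  then have "p < length (col_cells \<sigma>)" by (simp add: f_pos_eq_Some_iff col_reading_def)
  have "f_tab \<sigma> (tab x) tab = Some (tab_of_reading \<sigma> ((col_reading \<sigma> tab)[p := tab x + 1]))"
    using p(1) by (simp add: f_tab_def f_word_def)
  also have "tab_of_reading \<sigma> ((col_reading \<sigma> tab)[p := tab x + 1]) = tab(x := tab x + 1)"
    using tab_of_reading_update[OF composition \<open>p < length (col_cells \<sigma>)\<close>] p(2)
    by (simp add: pi_sigma_def)
  also have "\<dots> = pi_sigma \<sigma> Q'"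
    using assms pi_sigma_diagonal_update[OF composition x diagonal_x, of "\<lambda>a. a + 1" Q]
    by (simp add: opD_def diag_add_def tab_x split: if_splits)
  finally show ?thesis .
qed

end

end

theorem proposition3p8:
  fixes m k l r c :: nat and Q :: "nat \<Rightarrow> nat \<Rightarrow> nat" and \<sigma> :: "nat list"
    and T :: "nat \<times> nat \<Rightarrow> nat"
  assumes "quasi_array m Q"
    and "composition \<sigma> m"
    and "1 \<le> k" and "k \<le> m"
    and "T = pi_sigma \<sigma> Q"
    and "(r, c) \<in> set (ribbon_cells \<sigma>)" and "r + c - 1 = k"
    and "T (r, c) = l"
  shows "(opC m k Q \<noteq> None \<longleftrightarrow>
           (\<exists>p. e_pos (l - 1) (col_reading \<sigma> T) = Some p \<and> col_cells \<sigma> ! p = (r, c)))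
       \<and> (\<forall>Q'. opC m k Q = Some Q' \<longrightarrow> e_tab \<sigma> (l - 1) T = Some (pi_sigma \<sigma> Q'))
       \<and> (opD m k Q \<noteq> None \<longleftrightarrow>
           (\<exists>p. f_pos l (col_reading \<sigma> T) = Some p \<and> col_cells \<sigma> ! p = (r, c)))
       \<and> (\<forall>Q'. opD m k Q = Some Q' \<longrightarrow> f_tab \<sigma> l T = Some (pi_sigma \<sigma> Q'))"
proof -
  interpret ribbon_of_quasi_array m Q \<sigma>
    using assms(1,2) by unfold_locales
  have diagonal: "fst (r, c) + snd (r, c) = k + 1" using assms(3,7) by simp
  have "T = tab" "tab (r, c) = l" using assms(5,8) by simp_all
  then show ?thesis
    using opC_defined_iff_e_pos[OF assms(6) diagonal] e_tab_opC[OF assms(6) diagonal]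
      opD_defined_iff_f_pos[OF assms(6) diagonal] f_tab_opD[OF assms(6) diagonal]
    by blast
qed

end
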